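(* Let $(\mathfrak g,N)$ be a finite-dimensional Nijenhuis perm algebra, $r\in\mathfrak g\otimes\mathfrak g$ symmetric and $S:\mathfrak g\to\mathfrak g$ linear. Then $r$ is a solution of the $S$-admissible perm Yang–Baxter equation in $(\mathfrak g,N)$ if and only if $r^\sharp:\mathfrak g^*\to\mathfrak g$ is a weak $\mathcal O$-operator associated to $(\mathfrak g^*,R^*-L^*,R^* )$ and $S^*$. If moreover $S$ is admissible to $(\mathfrak g,N)$, then $r$ is a solution of the $S$-admissible perm Yang–Baxter equation in $(\mathfrak g,N)$ if and only if $r^\sharp$ is an $\mathcal O$-operator associated to the representation $(\mathfrak g^*,R^*-L^*,R^*,S^* )$ of $(\mathfrak g,N)$.
   Context: Over a field $K$. A (right) perm algebra: bilinear product with $(xy)z=x(yz)=x(zy)$. Nijenhuis operator: $N(x)N(y)+N^2(xy)=N(N(x)y)+N(xN(y))$. The $S$-admissible perm Yang–Baxter equation in $(\mathfrak g,N)$ for $r=\sum r^1\otimes r^2$ (second copy $\bar r$): $r_{13}r_{12}-r_{13}r_{23}+r_{23}r_{12}-r_{12}r_{23}=0$ and $(S\otimes\mathrm{id}-\mathrm{id}\otimes N)(r)=0$, where $r_{13}r_{12}=r^1\bar r^1\otimes\bar r^2\otimes r^2$, $r_{13}r_{23}=r^1\otimes\bar r^1\otimes r^2\bar r^2$, $r_{23}r_{12}=\bar r^1\otimes r^1\bar r^2\otimes r^2$, $r_{12}r_{23}=r^1\otimes r^2\bar r^1\otimes\bar r^2$. $r^\sharp(u^* )=\langle u^*,r^1\rangle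 r^2$. $\langle\xi R^*(a),y\rangle=\langle\xi,ya\rangle$, $\langle L^*(a)\xi,y\rangle=\langle\xi,ay\rangle$; in $(\mathfrak g^*,R^*-L^*,R^* )$ the left action is $(R^*-L^* )(a)\xi=\xi R^*(a)-L^*(a)\xi$ and the right action is $\xi R^*(a)$. A representation $(V,\ell,r)$ of $\mathfrak g$ is written with left action $\ell(x)v$ and right action $v\,r(x)$. Given a Nijenhuis perm algebra $(\mathfrak g,N)$, a representation $(V,\ell,r)$ of $\mathfrak g$ and $\alpha:V\to V$, a weak $\mathcal O$-operator associated to $(V,\ell,r)$ and $\alpha$ is a linear $T:V\to\mathfrak g$ with $T(u)T(v)=T(\ell(T(u))v+u\,r(T(v)))$ for $u,v\in V$ and $N\circ T=T\circ\alpha$; if $(V,\ell,r,\alpha)$ is a representation of $(\mathfrak g,N)$ (i.e. $\ell(N(x))\alpha(v)+\alpha^2(\ell(x)v)=\alpha(\ell(N(x))v)+\alpha(\ell(x)\alpha(v))$ and $\alpha(v)r(N(x))+\alpha^2(v\,r(x))=\alpha(v\,r(N(x)))+\alpha(\alpha(v)r(x))$) it is called an $\mathcal O$-operator associated to $(V,\ell,r,\alpha)$. $S$ is admissible to $(\mathfrak g,N)$ if $S(N(x)y)+xS^2(y)-N(x)S(y)-S(xS(y))=0$ and $S(xN(y))+S^2(x)y-S(x)N(y)-S(S(x)y)=0$. *)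

theory Defs
  imports Main
begin

text \<open>Finite-dimensional vector spaces over a field 'k are represented in coordinates
  as functions 'n \<Rightarrow> 'k with 'n a finite index type (a basis). Tensors in g\<otimes>g and
  g\<otimes>g\<otimes>g are coordinate arrays. The dual g* is again 'n \<Rightarrow> 'k with the
  pairing below.\<close>

type_synonym ('n, 'k) vec = "'n \<Rightarrow> 'k"

definition ebas :: "'n \<Rightarrow> ('n, 'k::field) vec" where
  "ebas i = (\<lambda>j. if j = i then 1 else 0)"

definition lin :: "(('m, 'k::field) vec \<Rightarrow> ('n, 'k) vec) \<Rightarrow> bool" where
  "lin f \<longleftrightarrow> (\<forall>x y. f (\<lambda>i. x i + y i) = (\<lambda>i. f x i + f y i)) \<and>
              (\<forall>c x. f (\<lambda>i. c * x i) = (\<lambda>i. c * f x i))"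

definition bilin :: "(('a, 'k::field) vec \<Rightarrow> ('b, 'k) vec \<Rightarrow> ('c, 'k) vec) \<Rightarrow> bool" where
  "bilin f \<longleftrightarrow> (\<forall>x. lin (f x)) \<and> (\<forall>y. lin (\<lambda>x. f x y))"

definition perm_alg :: "(('n, 'k::field) vec \<Rightarrow> ('n, 'k) vec \<Rightarrow> ('n, 'k) vec) \<Rightarrow> bool" where
  "perm_alg m \<longleftrightarrow> bilin m \<and>
     (\<forall>x y z. m (m x y) z = m x (m y z) \<and> m x (m y z) = m x (m z y))"

definition nijenhuis :: "(('n, 'k::field) vec \<Rightarrow> ('n, 'k) vec \<Rightarrow> ('n, 'k) vec) \<Rightarrow>
    (('n, 'k) vec \<Rightarrow> ('n, 'k) vec) \<Rightarrow> bool" where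
  "nijenhuis m N \<longleftrightarrow> lin N \<and>
     (\<forall>x y. (\<lambda>i. m (N x) (N y) i + N (N (m x y)) i) = (\<lambda>i. N (m (N x) y) i + N (m x (N y)) i))"

definition nijenhuis_perm :: "(('n, 'k::field) vec \<Rightarrow> ('n, 'k) vec \<Rightarrow> ('n, 'k) vec) \<Rightarrow>
    (('n, 'k) vec \<Rightarrow> ('n, 'k) vec) \<Rightarrow> bool" where
  "nijenhuis_perm m N \<longleftrightarrow> perm_alg m \<and> nijenhuis m N"

text \<open>Here r is written
  as a function ract v x meaning v r(x).\<close>
definition sdprod :: "(('n, 'k::field) vec \<Rightarrow> ('n, 'k) vec \<Rightarrow> ('n, 'k) vec) \<Rightarrow>
    (('n, 'k) vec \<Rightarrow> ('m, 'k) vec \<Rightarrow> ('m, 'k) vec) \<Rightarrow>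
    (('m, 'k) vec \<Rightarrow> ('n, 'k) vec \<Rightarrow> ('m, 'k) vec) \<Rightarrow>
    ('n, 'k) vec \<times> ('m, 'k) vec \<Rightarrow> ('n, 'k) vec \<times> ('m, 'k) vec \<Rightarrow> ('n, 'k) vec \<times> ('m, 'k) vec" where
  "sdprod m l r p q = (m (fst p) (fst q), (\<lambda>i. l (fst p) (snd q) i + r (snd p) (fst q) i))"

definition rep_perm :: "(('n, 'k::field) vec \<Rightarrow> ('n, 'k) vec \<Rightarrow> ('n, 'k) vec) \<Rightarrow>
    (('n, 'k) vec \<Rightarrow> ('m, 'k) vec \<Rightarrow> ('m, 'k) vec) \<Rightarrow>
    (('m, 'k) vec \<Rightarrow> ('n, 'k) vec \<Rightarrow> ('m, 'k) vec) \<Rightarrow> bool" where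
  "rep_perm m l r \<longleftrightarrow> bilin l \<and> bilin r \<and>
     (\<forall>p q s. sdprod m l r (sdprod m l r p q) s = sdprod m l r p (sdprod m l r q s) \<and>
              sdprod m l r p (sdprod m l r q s) = sdprod m l r p (sdprod m l r s q))"

definition rep_nij :: "(('n, 'k::field) vec \<Rightarrow> ('n, 'k) vec \<Rightarrow> ('n, 'k) vec) \<Rightarrow>
    (('n, 'k) vec \<Rightarrow> ('n, 'k) vec) \<Rightarrow>
    (('n, 'k) vec \<Rightarrow> ('m, 'k) vec \<Rightarrow> ('m, 'k) vec) \<Rightarrow>
    (('m, 'k) vec \<Rightarrow> ('n, 'k) vec \<Rightarrow> ('m, 'k) vec) \<Rightarrow>
    (('m, 'k) vec \<Rightarrow> ('m, 'k) vec) \<Rightarrow> bool" where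
  "rep_nij m N l r \<alpha> \<longleftrightarrow> rep_perm m l r \<and> lin \<alpha> \<and>
     (\<forall>x v. (\<lambda>i. l (N x) (\<alpha> v) i + \<alpha> (\<alpha> (l x v)) i) = (\<lambda>i. \<alpha> (l (N x) v) i + \<alpha> (l x (\<alpha> v)) i)) \<and>
     (\<forall>x v. (\<lambda>i. r (\<alpha> v) (N x) i + \<alpha> (\<alpha> (r v x)) i) = (\<lambda>i. \<alpha> (r v (N x)) i + \<alpha> (r (\<alpha> v) x) i))"

definition weak_O_op :: "(('n, 'k::field) vec \<Rightarrow> ('n, 'k) vec \<Rightarrow> ('n, 'k) vec) \<Rightarrow>
    (('n, 'k) vec \<Rightarrow> ('n, 'k) vec) \<Rightarrow>
    (('n, 'k) vec \<Rightarrow> ('m, 'k) vec \<Rightarrow> ('m, 'k) vec) \<Rightarrow>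
    (('m, 'k) vec \<Rightarrow> ('n, 'k) vec \<Rightarrow> ('m, 'k) vec) \<Rightarrow>
    (('m, 'k) vec \<Rightarrow> ('m, 'k) vec) \<Rightarrow> (('m, 'k) vec \<Rightarrow> ('n, 'k) vec) \<Rightarrow> bool" where
  "weak_O_op m N l r \<alpha> T \<longleftrightarrow> lin T \<and>
     (\<forall>u v. m (T u) (T v) = T (\<lambda>i. l (T u) v i + r u (T v) i)) \<and>
     (\<forall>v. N (T v) = T (\<alpha> v))"

definition O_op :: "(('n, 'k::field) vec \<Rightarrow> ('n, 'k) vec \<Rightarrow> ('n, 'k) vec) \<Rightarrow>
    (('n, 'k) vec \<Rightarrow> ('n, 'k) vec) \<Rightarrow>
    (('n, 'k) vec \<Rightarrow> ('m, 'k) vec \<Rightarrow> ('m, 'k) vec) \<Rightarrow>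
    (('m, 'k) vec \<Rightarrow> ('n, 'k) vec \<Rightarrow> ('m, 'k) vec) \<Rightarrow>
    (('m, 'k) vec \<Rightarrow> ('m, 'k) vec) \<Rightarrow> (('m, 'k) vec \<Rightarrow> ('n, 'k) vec) \<Rightarrow> bool" where
  "O_op m N l r \<alpha> T \<longleftrightarrow> rep_nij m N l r \<alpha> \<and> weak_O_op m N l r \<alpha> T"

definition pair :: "('n::finite, 'k::field) vec \<Rightarrow> ('n, 'k) vec \<Rightarrow> 'k" where
  "pair \<xi> x = (\<Sum>i\<in>UNIV. \<xi> i * x i)"

text \<open>Rstar m a \<xi> is \<xi> R*(a): \<langle>\<xi>R*(a), y\<rangle> = \<langle>\<xi>, y a\<rangle>.\<close>
definition Rstar :: "(('n::finite, 'k::field) vec \<Rightarrow> ('n, 'k) vec \<Rightarrow> ('n, 'k) vec) \<Rightarrow>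
    ('n, 'k) vec \<Rightarrow> ('n, 'k) vec \<Rightarrow> ('n, 'k) vec" where
  "Rstar m a \<xi> = (\<lambda>i. pair \<xi> (m (ebas i) a))"

text \<open>Lstar m a \<xi> is L*(a)\<xi>: \<langle>L*(a)\<xi>, y\<rangle> = \<langle>\<xi>, a y\<rangle>.\<close>
definition Lstar :: "(('n::finite, 'k::field) vec \<Rightarrow> ('n, 'k) vec \<Rightarrow> ('n, 'k) vec) \<Rightarrow>
    ('n, 'k) vec \<Rightarrow> ('n, 'k) vec \<Rightarrow> ('n, 'k) vec" where
  "Lstar m a \<xi> = (\<lambda>i. pair \<xi> (m a (ebas i)))"

definition dual_l :: "(('n::finite, 'k::field) vec \<Rightarrow> ('n, 'k) vec \<Rightarrow> ('n, 'k) vec) \<Rightarrow>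
    ('n, 'k) vec \<Rightarrow> ('n, 'k) vec \<Rightarrow> ('n, 'k) vec" where
  "dual_l m a \<xi> = (\<lambda>i. Rstar m a \<xi> i - Lstar m a \<xi> i)"

definition dual_r :: "(('n::finite, 'k::field) vec \<Rightarrow> ('n, 'k) vec \<Rightarrow> ('n, 'k) vec) \<Rightarrow>
    ('n, 'k) vec \<Rightarrow> ('n, 'k) vec \<Rightarrow> ('n, 'k) vec" where
  "dual_r m \<xi> a = Rstar m a \<xi>"

definition dualmap :: "(('n::finite, 'k::field) vec \<Rightarrow> ('n, 'k) vec) \<Rightarrow> ('n, 'k) vec \<Rightarrow> ('n, 'k) vec" where
  "dualmap S \<xi> = (\<lambda>i. pair \<xi> (S (ebas i)))"

text \<open>r = \<Sum>_{i,j} r i j e_i \<otimes> e_j; r\<sharp>(u*) = \<langle>u*, r^1\<rangle> r^2.\<close>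
definition rsharp :: "('n::finite \<Rightarrow> 'n \<Rightarrow> 'k::field) \<Rightarrow> ('n, 'k) vec \<Rightarrow> ('n, 'k) vec" where
  "rsharp r u = (\<lambda>j. \<Sum>i\<in>UNIV. r i j * pair u (ebas i))"

definition tens3 :: "('n, 'k::field) vec \<Rightarrow> ('n, 'k) vec \<Rightarrow> ('n, 'k) vec \<Rightarrow> 'n \<Rightarrow> 'n \<Rightarrow> 'n \<Rightarrow> 'k" where
  "tens3 x y z = (\<lambda>a b c. x a * y b * z c)"

definition tens2 :: "('n, 'k::field) vec \<Rightarrow> ('n, 'k) vec \<Rightarrow> 'n \<Rightarrow> 'n \<Rightarrow> 'k" where
  "tens2 x y = (\<lambda>a b. x a * y b)"

definition r13r12 :: "(('n::finite, 'k::field) vec \<Rightarrow> ('n, 'k) vec \<Rightarrow> ('n, 'k) vec) \<Rightarrow>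
    ('n \<Rightarrow> 'n \<Rightarrow> 'k) \<Rightarrow> 'n \<Rightarrow> 'n \<Rightarrow> 'n \<Rightarrow> 'k" where
  "r13r12 m r = (\<lambda>a b c. \<Sum>i\<in>UNIV. \<Sum>j\<in>UNIV. \<Sum>k\<in>UNIV. \<Sum>l\<in>UNIV.
      r i j * r k l * tens3 (m (ebas i) (ebas k)) (ebas l) (ebas j) a b c)"

definition r13r23 :: "(('n::finite, 'k::field) vec \<Rightarrow> ('n, 'k) vec \<Rightarrow> ('n, 'k) vec) \<Rightarrow>
    ('n \<Rightarrow> 'n \<Rightarrow> 'k) \<Rightarrow> 'n \<Rightarrow> 'n \<Rightarrow> 'n \<Rightarrow> 'k" where
  "r13r23 m r = (\<lambda>a b c. \<Sum>i\<in>UNIV. \<Sum>j\<in>UNIV. \<Sum>k\<in>UNIV. \<Sum>l\<in>UNIV.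
      r i j * r k l * tens3 (ebas i) (ebas k) (m (ebas j) (ebas l)) a b c)"

definition r23r12 :: "(('n::finite, 'k::field) vec \<Rightarrow> ('n, 'k) vec \<Rightarrow> ('n, 'k) vec) \<Rightarrow>
    ('n \<Rightarrow> 'n \<Rightarrow> 'k) \<Rightarrow> 'n \<Rightarrow> 'n \<Rightarrow> 'n \<Rightarrow> 'k" where
  "r23r12 m r = (\<lambda>a b c. \<Sum>i\<in>UNIV. \<Sum>j\<in>UNIV. \<Sum>k\<in>UNIV. \<Sum>l\<in>UNIV.
      r i j * r k l * tens3 (ebas k) (m (ebas i) (ebas l)) (ebas j) a b c)"

definition r12r23 :: "(('n::finite, 'k::field) vec \<Rightarrow> ('n, 'k) vec \<Rightarrow> ('n, 'k) vec) \<Rightarrow>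
    ('n \<Rightarrow> 'n \<Rightarrow> 'k) \<Rightarrow> 'n \<Rightarrow> 'n \<Rightarrow> 'n \<Rightarrow> 'k" where
  "r12r23 m r = (\<lambda>a b c. \<Sum>i\<in>UNIV. \<Sum>j\<in>UNIV. \<Sum>k\<in>UNIV. \<Sum>l\<in>UNIV.
      r i j * r k l * tens3 (ebas i) (m (ebas j) (ebas k)) (ebas l) a b c)"

definition S_adm_PYBE :: "(('n::finite, 'k::field) vec \<Rightarrow> ('n, 'k) vec \<Rightarrow> ('n, 'k) vec) \<Rightarrow>
    (('n, 'k) vec \<Rightarrow> ('n, 'k) vec) \<Rightarrow> (('n, 'k) vec \<Rightarrow> ('n, 'k) vec) \<Rightarrow>
    ('n \<Rightarrow> 'n \<Rightarrow> 'k) \<Rightarrow> bool" where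
  "S_adm_PYBE m N S r \<longleftrightarrow>
     (\<forall>a b c. r13r12 m r a b c - r13r23 m r a b c + r23r12 m r a b c - r12r23 m r a b c = 0) \<and>
     (\<forall>a b. (\<Sum>i\<in>UNIV. \<Sum>j\<in>UNIV. r i j * (tens2 (S (ebas i)) (ebas j) a b
                                         - tens2 (ebas i) (N (ebas j)) a b)) = 0)"

definition S_admissible :: "(('n, 'k::field) vec \<Rightarrow> ('n, 'k) vec \<Rightarrow> ('n, 'k) vec) \<Rightarrow>
    (('n, 'k) vec \<Rightarrow> ('n, 'k) vec) \<Rightarrow> (('n, 'k) vec \<Rightarrow> ('n, 'k) vec) \<Rightarrow> bool" where
  "S_admissible m N S \<longleftrightarrow>
     (\<forall>x y. (\<lambda>i. S (m (N x) y) i + m x (S (S y)) i - m (N x) (S y) i - S (m x (S y)) i) = (\<lambda>i. 0)) \<and>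
     (\<forall>x y. (\<lambda>i. S (m x (N y)) i + m (S (S x)) y i - m (S x) (N y) i - S (m (S x) y) i) = (\<lambda>i. 0))"

end

theory Submission imports Defs begin

text \<open>Pair everything with the dual space: by \<open>\<langle>\<xi>R\<^sup>*(a), y\<rangle> = \<langle>\<xi>, ya\<rangle>\<close>,
  \<open>\<langle>L\<^sup>*(a)\<xi>, y\<rangle> = \<langle>\<xi>, ay\<rangle>\<close> and \<open>\<langle>S\<^sup>*\<xi>, y\<rangle> = \<langle>\<xi>, Sy\<rangle>\<close>, identities about the dual
  actions become identities in \<open>\<mathfrak>g\<close>. For symmetric \<open>r\<close>, the component of
  \<open>r\<^sub>1\<^sub>3r\<^sub>1\<^sub>2 - r\<^sub>1\<^sub>3r\<^sub>2\<^sub>3 + r\<^sub>2\<^sub>3r\<^sub>1\<^sub>2 - r\<^sub>1\<^sub>2r\<^sub>2\<^sub>3\<close> at dual basis vectors \<open>(u, v, w)\<close> is the pairing of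
  \<open>w\<close> with \<open>r\<^sup>\<sharp>((R\<^sup>* - L\<^sup>*)(r\<^sup>\<sharp>u)v + uR\<^sup>*(r\<^sup>\<sharp>v)) - r\<^sup>\<sharp>(u)r\<^sup>\<sharp>(v)\<close>, and the component of
  \<open>(S \<otimes> id - id \<otimes> N)(r)\<close> at \<open>(u, w)\<close> is the pairing of \<open>w\<close> with \<open>r\<^sup>\<sharp>(S\<^sup>*u) - N(r\<^sup>\<sharp>u)\<close>.
  Both sides are multilinear, so vanishing on a basis is vanishing on \<open>\<mathfrak>g\<^sup>*\<close>. The perm
  axioms make \<open>(\<mathfrak>g\<^sup>*, R\<^sup>* - L\<^sup>*, R\<^sup>*)\<close> a representation of \<open>\<mathfrak>g\<close>, and the two admissibility
  identities for \<open>S\<close> are precisely the duals of the two compatibility conditions with \<open>S\<^sup>*\<close>.\<close>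

definition lin_functional :: "(('n, 'k::field) vec \<Rightarrow> 'k) \<Rightarrow> bool" where
  "lin_functional g \<longleftrightarrow>
     (\<forall>x y. g (\<lambda>i. x i + y i) = g x + g y) \<and> (\<forall>c x. g (\<lambda>i. c * x i) = c * g x)"

lemma lin_functional_zero: "lin_functional g \<Longrightarrow> g (\<lambda>i. 0) = 0"
proof -
  assume "lin_functional g"
  then have "\<forall>c x. g (\<lambda>i. c * x i) = c * g x"
    unfolding lin_functional_def by blast
  from this[rule_format, of 0 "\<lambda>i. 0"] show ?thesis by simp
qed

lemma lin_functional_expand:
  fixes g :: "('n::finite, 'k::field) vec \<Rightarrow> 'k"
  assumes g: "lin_functional g"
  shows "g x = (\<Sum>i\<in>UNIV. x i * g (ebas i))"
proof -
  have add: "g (\<lambda>i. y i + z i) = g y + g z" and scale: "g (\<lambda>i. c * y i) = c * g y" for y z c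
    using g unfolding lin_functional_def by blast+
  have "g (\<lambda>k. if k \<in> A then x k else 0) = (\<Sum>i\<in>A. x i * g (ebas i))" if "finite A" for A
    using that
  proof (induction A rule: finite_induct)
    case empty
    show ?case using lin_functional_zero[OF g] by simp
  next
    case (insert a A)
    have "(\<lambda>k. if k \<in> insert a A then x k else 0)
        = (\<lambda>k. (if k \<in> A then x k else 0) + x a * ebas a k)"
      using insert.hyps(2) by (auto simp: ebas_def)
    then show ?case
      using insert add[of "\<lambda>k. if k \<in> A then x k else 0" "\<lambda>k. x a * ebas a k"]
        scale[of "x a" "ebas a"] by simp
  qed
  from this[of UNIV] show ?thesis by simp
qed

lemma lin_functional_eq_0_iff_basis:
  fixes g :: "('n::finite, 'k::field) vec \<Rightarrow> 'k"
  assumes "lin_functional g"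
  shows "(\<forall>x. g x = 0) \<longleftrightarrow> (\<forall>i. g (ebas i) = 0)"
  by (metis (no_types, lifting) lin_functional_expand[OF assms] mult_zero_right sum.neutral)

lemma lin_component: "lin f \<Longrightarrow> lin_functional (\<lambda>x. f x j)"
  unfolding lin_def lin_functional_def by metis

lemma lin_expand:
  fixes f :: "('m::finite, 'k::field) vec \<Rightarrow> ('n, 'k) vec"
  shows "lin f \<Longrightarrow> f x j = (\<Sum>i\<in>UNIV. x i * f (ebas i) j)"
  by (rule lin_functional_expand[OF lin_component])

lemma lin_functional_comp: "lin_functional g \<Longrightarrow> lin f \<Longrightarrow> lin_functional (\<lambda>x. g (f x))"
  unfolding lin_functional_def lin_def by simp

lemma lin_functional_add:
  "lin_functional g \<Longrightarrow> lin_functional h \<Longrightarrow> lin_functional (\<lambda>x. g x + h x)"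
  unfolding lin_functional_def by (simp add: algebra_simps)

lemma lin_functional_diff:
  "lin_functional g \<Longrightarrow> lin_functional h \<Longrightarrow> lin_functional (\<lambda>x. g x - h x)"
  unfolding lin_functional_def by (simp add: algebra_simps)

lemma lin_comp: "lin f \<Longrightarrow> lin g \<Longrightarrow> lin (\<lambda>x. f (g x))"
  unfolding lin_def by simp

lemma lin_add: "lin f \<Longrightarrow> f (\<lambda>i. x i + y i) = (\<lambda>i. f x i + f y i)"
  unfolding lin_def by blast

lemma lin_scale: "lin f \<Longrightarrow> f (\<lambda>i. c * x i) = (\<lambda>i. c * f x i)"
  unfolding lin_def by blast

lemma bilin_left: "bilin m \<Longrightarrow> lin (\<lambda>x. m x y)"
  unfolding bilin_def by blast

lemma bilin_right: "bilin m \<Longrightarrow> lin (m x)"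
  unfolding bilin_def by blast

lemma bilin_expand:
  fixes m :: "('n::finite, 'k::field) vec \<Rightarrow> ('n, 'k) vec \<Rightarrow> ('n, 'k) vec"
  assumes "bilin m"
  shows "m x y a = (\<Sum>i\<in>UNIV. \<Sum>k\<in>UNIV. x i * y k * m (ebas i) (ebas k) a)"
proof -
  have "m x y a = (\<Sum>i\<in>UNIV. x i * m (ebas i) y a)"
    by (rule lin_expand[OF bilin_left[OF assms]])
  also have "\<dots> = (\<Sum>i\<in>UNIV. x i * (\<Sum>k\<in>UNIV. y k * m (ebas i) (ebas k) a))"
    by (simp add: lin_expand[OF bilin_right[OF assms], of "ebas _" y])
  finally show ?thesis by (simp add: sum_distrib_left mult.assoc)
qed

lemma ebas_times [simp]: "ebas i j * c = (if j = i then c else 0)"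
  by (simp add: ebas_def)

lemma times_ebas [simp]: "c * ebas i j = (if j = i then c else 0)"
  by (simp add: ebas_def)

lemma mult_if_zero_right: "(x::'a::mult_zero) * (if P then y else 0) = (if P then x * y else 0)"
  by simp

lemma mult_if_zero_left: "(if P then y else 0) * (x::'a::mult_zero) = (if P then y * x else 0)"
  by simp

lemma sum_if_zero: "(\<Sum>x\<in>A. if P then f x else 0) = (if P then sum f A else 0)"
  by simp

lemma lin_functional_pair_right: "lin_functional (pair \<xi>)"
  unfolding lin_functional_def pair_def
  by (simp add: algebra_simps sum.distrib sum_distrib_left)

lemma lin_functional_pair_left: "lin_functional (\<lambda>\<xi>. pair \<xi> x)"
  unfolding lin_functional_def pair_def
  by (simp add: algebra_simps sum.distrib sum_distrib_left)

lemma pair_ebas_left [simp]: "pair (ebas i) x = x i"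
  unfolding pair_def by simp

lemma pair_ebas_right [simp]: "pair \<xi> (ebas i) = \<xi> i"
  unfolding pair_def by simp

lemma pair_ext: "(\<And>x. pair \<xi> x = pair \<eta> x) \<Longrightarrow> \<xi> = \<eta>"
  by (metis pair_ebas_right ext)

lemma pair_add_left: "pair (\<lambda>i. \<xi> i + \<eta> i) x = pair \<xi> x + pair \<eta> x"
  unfolding pair_def by (simp add: algebra_simps sum.distrib)

lemma pair_add_right: "pair \<xi> (\<lambda>i. x i + y i) = pair \<xi> x + pair \<xi> y"
  unfolding pair_def by (simp add: algebra_simps sum.distrib)

lemma pair_diff_left: "pair (\<lambda>i. \<xi> i - \<eta> i) x = pair \<xi> x - pair \<eta> x"
  unfolding pair_def by (simp add: algebra_simps sum_subtractf)

lemma pair_diff_right: "pair \<xi> (\<lambda>i. x i - y i) = pair \<xi> x - pair \<xi> y"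
  unfolding pair_def by (simp add: algebra_simps sum_subtractf)

lemma pair_scale_left: "pair (\<lambda>i. c * \<xi> i) x = c * pair \<xi> x"
  unfolding pair_def by (simp add: sum_distrib_left algebra_simps)

lemma pair_scale_right: "pair \<xi> (\<lambda>i. c * x i) = c * pair \<xi> x"
  unfolding pair_def by (simp add: sum_distrib_left algebra_simps)

lemma pair_dual_coordinates:
  assumes "lin_functional g"
  shows "pair (\<lambda>i. g (ebas i)) y = g y"
  unfolding pair_def lin_functional_expand[OF assms, of y] by (simp add: mult.commute)

lemma pair_Rstar:
  assumes "bilin m" shows "pair (Rstar m a \<xi>) y = pair \<xi> (m y a)"
  using pair_dual_coordinates[of "\<lambda>x. pair \<xi> (m x a)" y]
    lin_functional_comp[OF lin_functional_pair_right bilin_left[OF assms]]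
  by (simp add: Rstar_def)

lemma pair_Lstar:
  assumes "bilin m" shows "pair (Lstar m a \<xi>) y = pair \<xi> (m a y)"
  using pair_dual_coordinates[of "\<lambda>x. pair \<xi> (m a x)" y]
    lin_functional_comp[OF lin_functional_pair_right bilin_right[OF assms]]
  by (simp add: Lstar_def)

lemma pair_dualmap:
  assumes "lin S" shows "pair (dualmap S \<xi>) y = pair \<xi> (S y)"
  using pair_dual_coordinates[of "\<lambda>x. pair \<xi> (S x)" y]
    lin_functional_comp[OF lin_functional_pair_right assms]
  by (simp add: dualmap_def)

lemma pair_dual_l: "bilin m \<Longrightarrow> pair (dual_l m a \<xi>) y = pair \<xi> (m y a) - pair \<xi> (m a y)"
  unfolding dual_l_def by (simp add: pair_diff_left pair_Rstar pair_Lstar)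

lemma pair_dual_r: "bilin m \<Longrightarrow> pair (dual_r m \<xi> a) y = pair \<xi> (m y a)"
  unfolding dual_r_def by (rule pair_Rstar)

lemma lin_dualmap: "lin (dualmap S)"
  unfolding lin_def dualmap_def
  by (simp add: pair_add_left pair_scale_left)

lemma rsharp_ebas [simp]: "rsharp r (ebas c) = r c"
  unfolding rsharp_def by simp

lemma lin_rsharp: "lin (rsharp r)"
  unfolding lin_def rsharp_def
  by (simp add: pair_add_left pair_scale_left algebra_simps sum.distrib sum_distrib_left)

lemma pair_rsharp_commute:
  assumes "\<forall>i j. r i j = r j i"
  shows "pair \<xi> (rsharp r \<eta>) = pair \<eta> (rsharp r \<xi>)"
proof -
  have "pair \<xi> (rsharp r \<eta>) = (\<Sum>i\<in>UNIV. \<Sum>j\<in>UNIV. \<xi> i * r j i * \<eta> j)"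
    by (simp add: rsharp_def pair_def sum_distrib_left mult.assoc)
  also have "\<dots> = (\<Sum>j\<in>UNIV. \<Sum>i\<in>UNIV. \<xi> i * r j i * \<eta> j)"
    by (rule sum.swap)
  also have "\<dots> = pair \<eta> (rsharp r \<xi>)"
    by (simp add: rsharp_def pair_def sum_distrib_left assms ac_simps)
  finally show ?thesis .
qed

definition pybe_form ::
    "(('n::finite, 'k::field) vec \<Rightarrow> ('n, 'k) vec \<Rightarrow> ('n, 'k) vec) \<Rightarrow> ('n \<Rightarrow> 'n \<Rightarrow> 'k) \<Rightarrow>
     ('n, 'k) vec \<Rightarrow> ('n, 'k) vec \<Rightarrow> ('n, 'k) vec \<Rightarrow> 'k" where
  "pybe_form m r u v w =
     pair u (m (rsharp r w) (rsharp r v)) - pair w (m (rsharp r u) (rsharp r v))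
     + pair v (m (rsharp r w) (rsharp r u)) - pair v (m (rsharp r u) (rsharp r w))"

lemma pybe_tensor_eq_pybe_form:
  assumes m: "bilin m" and r: "\<forall>i j. r i j = r j i"
  shows "r13r12 m r a b c - r13r23 m r a b c + r23r12 m r a b c - r12r23 m r a b c
       = pybe_form m r (ebas a) (ebas b) (ebas c)"
proof -
  have "r13r12 m r a b c = m (r c) (r b) a"
    unfolding r13r12_def tens3_def bilin_expand[OF m, of "r c"]
    by (simp add: r ebas_def mult_if_zero_left mult_if_zero_right sum_if_zero)
  moreover have "r13r23 m r a b c = m (r a) (r b) c"
    unfolding r13r23_def tens3_def bilin_expand[OF m, of "r a"]
    by (simp add: r ebas_def mult_if_zero_left mult_if_zero_right sum_if_zero)
  moreover have "r23r12 m r a b c = m (r c) (r a) b"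
    unfolding r23r12_def tens3_def bilin_expand[OF m, of "r c"]
    by (simp add: r ebas_def mult_if_zero_left mult_if_zero_right sum_if_zero)
  moreover have "r12r23 m r a b c = m (r a) (r c) b"
    unfolding r12r23_def tens3_def bilin_expand[OF m, of "r a"]
    by (simp add: r ebas_def mult_if_zero_left mult_if_zero_right sum_if_zero)
  ultimately show ?thesis
    unfolding pybe_form_def by simp
qed

lemma lin_functional_pair_mult_rsharp:
  assumes m: "bilin m"
  shows "lin_functional (\<lambda>u. pair \<xi> (m (rsharp r u) y))"
    and "lin_functional (\<lambda>u. pair \<xi> (m y (rsharp r u)))"
  using lin_functional_comp[OF lin_functional_pair_right lin_comp[OF bilin_left[OF m] lin_rsharp]]
    lin_functional_comp[OF lin_functional_pair_right lin_comp[OF bilin_right[OF m] lin_rsharp]]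
  by blast+

lemma lin_functional_pybe_form_left:
  "bilin m \<Longrightarrow> lin_functional (\<lambda>u. pybe_form m r u v w)"
  unfolding pybe_form_def
  by (intro lin_functional_add lin_functional_diff lin_functional_pair_left
      lin_functional_pair_mult_rsharp)

lemma lin_functional_pybe_form_middle:
  "bilin m \<Longrightarrow> lin_functional (\<lambda>v. pybe_form m r u v w)"
  unfolding pybe_form_def
  by (intro lin_functional_add lin_functional_diff lin_functional_pair_left
      lin_functional_pair_mult_rsharp)

lemma O_identity_defect_eq_pybe_form:
  assumes m: "bilin m" and r: "\<forall>i j. r i j = r j i"
  shows "rsharp r (\<lambda>i. dual_l m (rsharp r u) v i + dual_r m u (rsharp r v) i) c
           - m (rsharp r u) (rsharp r v) c
       = pybe_form m r u v (ebas c)"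
proof -
  have "rsharp r \<xi> c = pair \<xi> (rsharp r (ebas c))" for \<xi>
    using pair_rsharp_commute[OF r, of "ebas c" \<xi>] by simp
  then show ?thesis
    unfolding pybe_form_def by (simp add: pair_add_left pair_dual_l[OF m] pair_dual_r[OF m])
qed

lemma weak_O_identity_iff_pybe_form:
  assumes m: "bilin m" and r: "\<forall>i j. r i j = r j i"
  shows "(\<forall>u v. m (rsharp r u) (rsharp r v)
                  = rsharp r (\<lambda>i. dual_l m (rsharp r u) v i + dual_r m u (rsharp r v) i))
     \<longleftrightarrow> (\<forall>a b c. pybe_form m r (ebas a) (ebas b) (ebas c) = 0)"
proof -
  have "(\<forall>u v. m (rsharp r u) (rsharp r v)
                  = rsharp r (\<lambda>i. dual_l m (rsharp r u) v i + dual_r m u (rsharp r v) i))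
     \<longleftrightarrow> (\<forall>c u v. pybe_form m r u v (ebas c) = 0)"
    by (auto simp: fun_eq_iff O_identity_defect_eq_pybe_form[OF m r, symmetric])
  also have "\<dots> \<longleftrightarrow> (\<forall>c u b. pybe_form m r u (ebas b) (ebas c) = 0)"
    using lin_functional_eq_0_iff_basis[OF lin_functional_pybe_form_middle[OF m]] by blast
  also have "\<dots> \<longleftrightarrow> (\<forall>c a b. pybe_form m r (ebas a) (ebas b) (ebas c) = 0)"
    using lin_functional_eq_0_iff_basis[OF lin_functional_pybe_form_left[OF m]] by blast
  finally show ?thesis by blast
qed

lemma S_tensor_eq:
  assumes "lin N"
  shows "(\<Sum>i\<in>UNIV. \<Sum>j\<in>UNIV. r i j * (tens2 (S (ebas i)) (ebas j) a b
                                        - tens2 (ebas i) (N (ebas j)) a b))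
       = rsharp r (dualmap S (ebas a)) b - N (rsharp r (ebas a)) b"
  unfolding tens2_def rsharp_ebas lin_expand[OF assms, of "r a"]
  by (simp add: rsharp_def dualmap_def right_diff_distrib sum_subtractf mult.commute
      mult_if_zero_right sum_if_zero)

lemma S_adm_PYBE_iff_weak_O_op:
  assumes m: "bilin m" and N: "lin N" and r: "\<forall>i j. r i j = r j i"
  shows "S_adm_PYBE m N S r \<longleftrightarrow> weak_O_op m N (dual_l m) (dual_r m) (dualmap S) (rsharp r)"
proof -
  have lf: "lin_functional (\<lambda>\<xi>. rsharp r (dualmap S \<xi>) b - N (rsharp r \<xi>) b)" for b
    by (intro lin_functional_diff lin_component lin_comp[OF lin_rsharp lin_dualmap]
        lin_comp[OF N lin_rsharp])
  have "(\<forall>\<xi>. N (rsharp r \<xi>) = rsharp r (dualmap S \<xi>))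
      \<longleftrightarrow> (\<forall>b \<xi>. rsharp r (dualmap S \<xi>) b - N (rsharp r \<xi>) b = 0)"
    by (auto simp: fun_eq_iff)
  also have "\<dots> \<longleftrightarrow> (\<forall>b a. rsharp r (dualmap S (ebas a)) b - N (rsharp r (ebas a)) b = 0)"
    using lin_functional_eq_0_iff_basis[OF lf] by blast
  finally have "(\<forall>\<xi>. N (rsharp r \<xi>) = rsharp r (dualmap S \<xi>))
      \<longleftrightarrow> (\<forall>a b. rsharp r (dualmap S (ebas a)) b - N (rsharp r (ebas a)) b = 0)"
    by blast
  then show ?thesis
    unfolding S_adm_PYBE_def weak_O_op_def
    by (simp add: pybe_tensor_eq_pybe_form[OF m r] weak_O_identity_iff_pybe_form[OF m r]
        S_tensor_eq[OF N] lin_rsharp)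
qed

lemma bilin_dual_l:
  assumes m: "bilin m" shows "bilin (dual_l m)"
  unfolding bilin_def lin_def
  by (auto intro!: pair_ext simp: pair_dual_l[OF m] pair_add_left pair_scale_left
      pair_add_right pair_scale_right lin_add[OF bilin_right[OF m]] lin_scale[OF bilin_right[OF m]]
      lin_add[OF bilin_left[OF m]] lin_scale[OF bilin_left[OF m]] algebra_simps)

lemma bilin_dual_r:
  assumes m: "bilin m" shows "bilin (dual_r m)"
  unfolding bilin_def lin_def
  by (auto intro!: pair_ext simp: pair_dual_r[OF m] pair_add_left pair_scale_left
      pair_add_right pair_scale_right lin_add[OF bilin_right[OF m]] lin_scale[OF bilin_right[OF m]]
      lin_add[OF bilin_left[OF m]] lin_scale[OF bilin_left[OF m]] algebra_simps)

lemma rep_perm_dual: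
  assumes "perm_alg m" shows "rep_perm m (dual_l m) (dual_r m)"
proof -
  have m: "bilin m" and assoc: "m (m x y) z = m x (m y z)" and perm: "m x (m y z) = m x (m z y)"
    for x y z using assms unfolding perm_alg_def by blast+
  let ?prod = "sdprod m (dual_l m) (dual_r m)"
  have "?prod (?prod p q) s = ?prod p (?prod q s)" for p q s
    unfolding sdprod_def
    by (auto intro!: pair_ext simp: assoc perm pair_dual_l[OF m] pair_dual_r[OF m]
        pair_add_left pair_add_right algebra_simps)
  moreover have "?prod p (?prod q s) = ?prod p (?prod s q)" for p q s
    unfolding sdprod_def
    by (auto intro!: pair_ext simp: assoc perm pair_dual_l[OF m] pair_dual_r[OF m]
        pair_add_left pair_add_right algebra_simps)
  ultimately show ?thesis
    unfolding rep_perm_def using bilin_dual_l[OF m] bilin_dual_r[OF m] by blast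
qed

lemma S_admissible_left:
  assumes "S_admissible m N S"
  shows "S (m x (S y)) = (\<lambda>i. S (m (N x) y) i + m x (S (S y)) i - m (N x) (S y) i)"
  using assms unfolding S_admissible_def fun_eq_iff by (simp add: algebra_simps)

lemma S_admissible_right:
  assumes "S_admissible m N S"
  shows "S (m (S x) y) = (\<lambda>i. S (m x (N y)) i + m (S (S x)) y i - m (S x) (N y) i)"
  using assms unfolding S_admissible_def fun_eq_iff by (simp add: algebra_simps)

lemma rep_nij_dual:
  assumes p: "perm_alg m" and S: "lin S" and adm: "S_admissible m N S"
  shows "rep_nij m N (dual_l m) (dual_r m) (dualmap S)"
proof -
  have m: "bilin m" using p unfolding perm_alg_def by blast
  have "(\<lambda>i. dual_l m (N x) (dualmap S v) i + dualmap S (dualmap S (dual_l m x v)) i)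
      = (\<lambda>i. dualmap S (dual_l m (N x) v) i + dualmap S (dual_l m x (dualmap S v)) i)" for x v
    by (rule pair_ext) (simp add: pair_add_left pair_add_right pair_diff_right pair_dual_l[OF m]
        pair_dualmap[OF S] S_admissible_left[OF adm] S_admissible_right[OF adm])
  moreover have "(\<lambda>i. dual_r m (dualmap S v) (N x) i + dualmap S (dualmap S (dual_r m v x)) i)
      = (\<lambda>i. dualmap S (dual_r m v (N x)) i + dualmap S (dual_r m (dualmap S v) x) i)" for x v
    by (rule pair_ext) (simp add: pair_add_left pair_add_right pair_diff_right pair_dual_r[OF m]
        pair_dualmap[OF S] S_admissible_right[OF adm])
  ultimately show ?thesis
    unfolding rep_nij_def using rep_perm_dual[OF p] lin_dualmap by blast
qed

theorem corollary2p38: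
  fixes m :: "('n::finite, 'k::field) vec \<Rightarrow> ('n, 'k) vec \<Rightarrow> ('n, 'k) vec"
    and N S :: "('n, 'k) vec \<Rightarrow> ('n, 'k) vec"
    and r :: "'n \<Rightarrow> 'n \<Rightarrow> 'k"
  assumes "nijenhuis_perm m N"
    and "\<forall>i j. r i j = r j i"
    and "lin S"
  shows "(S_adm_PYBE m N S r \<longleftrightarrow>
            weak_O_op m N (dual_l m) (dual_r m) (dualmap S) (rsharp r)) \<and>
         (S_admissible m N S \<longrightarrow>
            (S_adm_PYBE m N S r \<longleftrightarrow>
               O_op m N (dual_l m) (dual_r m) (dualmap S) (rsharp r)))"
proof -
  have p: "perm_alg m" and N: "lin N"
    using assms(1) unfolding nijenhuis_perm_def nijenhuis_def by blast+
  then have m: "bilin m" unfolding perm_alg_def by blast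
  show ?thesis
    using S_adm_PYBE_iff_weak_O_op[OF m N assms(2)] rep_nij_dual[OF p assms(3)]
    unfolding O_op_def by blast
qed

end
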